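(* For any $A>0$, $\epsilon>0$ and every $N$ (sufficiently large), there is a $z=z(N,A,\epsilon)$ with $\log\log z>(1-\epsilon)\log\log N$ and $z<N^{\epsilon}$ such that, for all but $O_{A,\epsilon}(N(\log N)^{-A})$ integers $n$ between $1$ and $N$: (1) $\prod_{p\mid n,\ p\leq z} p^{v_p(n)} < N^{\epsilon}$; (2) $\omega(n) - \#\{p \text{ prime}: p\mid n,\ p\leq z\} < \epsilon\log\log z$.
   Context: $v_p(n)$ is the exponent of the prime $p$ in $n$; $\omega(n)$ is the number of distinct prime divisors of $n$; $p$ ranges over primes. *)

theory Defs
  imports Complex_Main "HOL-Computational_Algebra.Primes"
begin

definition omega :: "nat \<Rightarrow> nat" where
  "omega n = card (prime_factors n)"

definition smooth_part :: "real \<Rightarrow> nat \<Rightarrow> nat" where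
  "smooth_part z n = (\<Prod>p\<in>{p\<in>prime_factors n. real p \<le> z}. p ^ multiplicity p n)"

definition omega_le :: "real \<Rightarrow> nat \<Rightarrow> nat" where
  "omega_le z n = card {p\<in>prime_factors n. real p \<le> z}"

end

theory Submission
  imports Defs "HOL-Library.FuncSet" "HOL-Real_Asymp.Real_Asymp"
begin

text \<open>Take \<open>z = 2^a\<close> with \<open>a \<approx> \<epsilon> ln N / (2 (A + 12) ln ln N)\<close>. An exceptional \<open>n \<le> N\<close> either
  has a \<open>z\<close>-smooth part \<open>d \<ge> N^\<epsilon>\<close>, or has at least \<open>k = \<lceil>\<epsilon> ln ln z\<rceil>\<close> distinct prime factors
  above \<open>z\<close>. Counting multiples, the first kind contributes at most \<open>N \<Sum> 1/d\<close> over the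
  \<open>z\<close>-smooth \<open>d \<ge> N^\<epsilon>\<close>, which Rankin's trick with exponent \<open>1 - 1/(2a)\<close> bounds by
  \<open>N^(1 - \<epsilon>/(2a)) e^15 a^12 \<le> e^15 N (ln N)^-A\<close>. The second kind contributes at most
  \<open>N \<Sum> 1/\<Prod>T\<close> over the \<open>k\<close>-sets \<open>T\<close> of primes in \<open>(z, N]\<close>; this is at most
  \<open>N exp (r S) / r^k\<close> for every \<open>r > 0\<close>, where \<open>S = O(ln ln ln N)\<close> is the sum of \<open>1/p\<close> over these
  primes by Chebyshev's bound, and \<open>r = \<surd>(ln ln N)\<close> makes it \<open>N (ln N)^-A\<close> as well.\<close>

lemma prod_prime_divisors_dvd:
  fixes n :: nat
  assumes "finite S" "n > 0" "\<And>p. p \<in> S \<Longrightarrow> prime p \<and> p dvd n"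
  shows "\<Prod>S dvd n"
proof -
  have "\<Prod>S dvd (\<Prod>p\<in>S. p ^ multiplicity p n)"
    using assms by (intro prod_dvd_prod) (simp add: prime_multiplicity_gt_zero_iff)
  also have "\<dots> dvd (\<Prod>p\<in>prime_factors n. p ^ multiplicity p n)"
    using assms by (intro prod_dvd_prod_subset) (auto simp: in_prime_factors_iff)
  also have "\<dots> = n"
    using prime_factorization_nat[OF \<open>n > 0\<close>] by simp
  finally show ?thesis .
qed

lemma card_multiples_le:
  fixes d N :: nat
  assumes "d > 0"
  shows "real (card {n\<in>{1..N}. d dvd n}) \<le> real N / real d"
proof -
  have "{n\<in>{1..N}. d dvd n} \<subseteq> (\<lambda>k. d * k) ` {1..N div d}"
  proof
    fix n assume "n \<in> {n\<in>{1..N}. d dvd n}"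
    then obtain k where k: "n = d * k" "1 \<le> n" "n \<le> N" by auto
    then have "1 \<le> k" "k \<le> N div d"
      using assms by (auto simp: less_eq_div_iff_mult_less_eq mult.commute)
    then show "n \<in> (\<lambda>k. d * k) ` {1..N div d}" using k by auto
  qed
  then have "card {n\<in>{1..N}. d dvd n} \<le> card {1..N div d}"
    by (meson card_image_le card_mono finite_atLeastAtMost finite_imageI le_trans)
  then have "real (card {n\<in>{1..N}. d dvd n}) \<le> real (N div d)" by simp
  also have "\<dots> \<le> real N / real d" by (rule of_nat_div_le_of_nat)
  finally show ?thesis .
qed

lemma card_multiples_UN_le:
  fixes f :: "'a \<Rightarrow> nat"
  assumes "finite I" "\<And>i. i \<in> I \<Longrightarrow> f i > 0"
  shows "real (card {n\<in>{1..N}. \<exists>i\<in>I. f i dvd n}) \<le> real N * (\<Sum>i\<in>I. 1 / real (f i))"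
proof -
  have "{n\<in>{1..N}. \<exists>i\<in>I. f i dvd n} = (\<Union>i\<in>I. {n\<in>{1..N}. f i dvd n})" by auto
  then have "card {n\<in>{1..N}. \<exists>i\<in>I. f i dvd n} \<le> (\<Sum>i\<in>I. card {n\<in>{1..N}. f i dvd n})"
    using card_UN_le[OF \<open>finite I\<close>] by simp
  then have "real (card {n\<in>{1..N}. \<exists>i\<in>I. f i dvd n}) \<le> (\<Sum>i\<in>I. real (card {n\<in>{1..N}. f i dvd n}))"
    by (simp flip: of_nat_sum)
  also have "\<dots> \<le> (\<Sum>i\<in>I. real N / real (f i))"
    using assms by (intro sum_mono card_multiples_le) auto
  finally show ?thesis by (simp add: sum_distrib_left)
qed

lemma sum_inverse_le_ln:
  fixes a b :: nat
  assumes "1 \<le> a" "a < b"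
  shows "(\<Sum>j\<in>{a..<b}. 1 / real j) \<le> 1 + ln (real b - 1) - ln (real a)"
  using \<open>a < b\<close>
proof (induction b)
  case (Suc m)
  show ?case
  proof (cases "m = a")
    case False
    with Suc have "a < m" by simp
    have "ln (1 - 1 / real m) \<le> - (1 / real m)"
      using \<open>a < m\<close> assms(1) ln_le_minus_one[of "1 - 1 / real m"] by simp
    moreover have "ln (1 - 1 / real m) = ln (real m - 1) - ln (real m)"
      using \<open>a < m\<close> assms(1) by (simp add: ln_divide_pos[symmetric] field_simps)
    ultimately show ?thesis
      using Suc.IH[OF \<open>a < m\<close>] \<open>a < m\<close> by simp
  qed (use assms in simp)
qed simp

text \<open>Chebyshev's argument: the primes in \<open>(M, 2M]\<close> all divide \<open>2M choose M \<le> 4^M\<close>.\<close>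

lemma sum_inverse_primes_dyadic_block_le:
  fixes j :: nat
  assumes "j \<ge> 1"
  shows "(\<Sum>p | prime p \<and> 2^j < p \<and> p \<le> 2^(j+1). 1 / real p) \<le> 2 / real j"
proof -
  define M :: nat where "M = 2^j"
  define Q where "Q = {p. prime p \<and> M < p \<and> p \<le> 2 * M}"
  have "finite Q" unfolding Q_def by (rule finite_subset[of _ "{..2 * M}"]) auto
  have "M > 0" unfolding M_def by simp
  have "\<Prod>Q dvd (2 * M choose M)"
  proof (rule prod_prime_divisors_dvd[OF \<open>finite Q\<close>])
    fix p assume "p \<in> Q"
    then have p: "prime p" "M < p" "p \<le> 2 * M" unfolding Q_def by auto
    have "fact (2 * M) = fact M * fact M * (2 * M choose M)"
      using binomial_fact_lemma[of M "2 * M"] by simp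
    moreover have "p dvd fact (2 * M)" "\<not> p dvd fact M"
      using p by (simp_all add: prime_dvd_fact_iff)
    ultimately show "prime p \<and> p dvd (2 * M choose M)"
      using p(1) by (metis prime_dvd_mult_iff)
  qed simp
  then have "M ^ card Q \<le> 2 ^ (2 * M)"
    using \<open>finite Q\<close> dvd_imp_le[of "\<Prod>Q" "2 * M choose M"] binomial_le_pow2[of "2 * M" M]
      prod_mono[of Q "\<lambda>_. M" id] by (force simp: Q_def)
  then have "j * card Q \<le> 2 * M"
    unfolding M_def by (simp add: power_mult[symmetric] power_le_imp_le_exp)
  have "(\<Sum>p\<in>Q. 1 / real p) \<le> (\<Sum>p\<in>Q. 1 / real M)"
    using \<open>M > 0\<close> by (intro sum_mono) (auto simp: Q_def intro!: divide_left_mono)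
  also have "\<dots> = real (card Q) / real M" by simp
  also have "\<dots> \<le> 2 / real j"
    using \<open>j * card Q \<le> 2 * M\<close> \<open>M > 0\<close> assms
    by (simp add: field_simps flip: of_nat_mult)
  finally show ?thesis unfolding Q_def M_def by (simp add: mult.commute)
qed

lemma sum_inverse_primes_dyadic_le_harmonic:
  fixes a b :: nat
  assumes "1 \<le> a" "a \<le> b"
  shows "(\<Sum>p | prime p \<and> 2^a < p \<and> p \<le> 2^b. 1 / real p) \<le> 2 * (\<Sum>j\<in>{a..<b}. 1 / real j)"
  using \<open>a \<le> b\<close>
proof (induction b)
  case (Suc m)
  show ?case
  proof (cases "a = Suc m")
    case False
    with Suc have "a \<le> m" by simp
    have pow_le: "(2::nat)^a \<le> 2^m"
      using \<open>a \<le> m\<close> by (simp add: power_increasing)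
    have "{p. prime p \<and> 2^a < p \<and> p \<le> (2::nat)^Suc m} =
        {p. prime p \<and> 2^a < p \<and> p \<le> 2^m} \<union> {p. prime p \<and> 2^m < p \<and> p \<le> 2^(m+1)}"
      by (auto intro: le_less_trans[OF pow_le])
    moreover have "finite {p. prime p \<and> 2^a < p \<and> p \<le> (2::nat)^m}"
      "finite {p. prime p \<and> 2^m < p \<and> p \<le> (2::nat)^(m+1)}" by auto
    ultimately have "(\<Sum>p | prime p \<and> 2^a < p \<and> p \<le> 2^Suc m. 1 / real p) =
        (\<Sum>p | prime p \<and> 2^a < p \<and> p \<le> 2^m. 1 / real p) +
        (\<Sum>p | prime p \<and> 2^m < p \<and> p \<le> 2^(m+1). 1 / real p)"
      by (simp add: sum.union_disjoint disjoint_iff)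
    also have "\<dots> \<le> 2 * (\<Sum>j\<in>{a..<m}. 1 / real j) + 2 / real m"
      using Suc.IH[OF \<open>a \<le> m\<close>] sum_inverse_primes_dyadic_block_le[of m] \<open>a \<le> m\<close> assms(1)
      by simp
    finally show ?thesis using \<open>a \<le> m\<close> by (simp add: algebra_simps)
  next
    case True
    then have "{p. prime p \<and> 2^a < p \<and> p \<le> (2::nat)^Suc m} = {}" by auto
    then show ?thesis using True by (simp only: sum.empty) simp
  qed
qed (use assms in simp)

lemma sum_inverse_primes_dyadic_le:
  fixes a b :: nat
  assumes "1 \<le> a" "a \<le> b"
  shows "(\<Sum>p | prime p \<and> 2^a < p \<and> p \<le> 2^b. 1 / real p) \<le> 2 + 2 * ln (real b) - 2 * ln (real a)"
proof (cases "a = b")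
  case False
  with assms have "a < b" by simp
  have "(\<Sum>p | prime p \<and> 2^a < p \<and> p \<le> 2^b. 1 / real p) \<le> 2 * (1 + ln (real b - 1) - ln (real a))"
    using sum_inverse_primes_dyadic_le_harmonic[OF assms] sum_inverse_le_ln[OF assms(1) \<open>a < b\<close>]
    by simp
  also have "\<dots> \<le> 2 + 2 * ln (real b) - 2 * ln (real a)" using \<open>a < b\<close> assms by simp
  finally show ?thesis .
next
  case True
  then have "{p. prime p \<and> 2^a < p \<and> p \<le> (2::nat)^b} = {}" by auto
  then show ?thesis using True by (simp only: sum.empty)
qed

lemma sum_inverse_primes_le:
  fixes a :: nat
  assumes "1 \<le> a"
  shows "(\<Sum>p | prime p \<and> p \<le> 2^a. 1 / real p) \<le> 5/2 + 2 * ln (real a)"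
proof -
  have "(2::nat) \<le> 2^a" using power_increasing[of 1 a "2::nat"] assms by simp
  moreover have "prime p \<Longrightarrow> p \<noteq> 2 \<Longrightarrow> 2 < p" for p :: nat
    using prime_ge_2_nat[of p] by linarith
  ultimately have "{p. prime p \<and> p \<le> (2::nat)^a} = insert 2 {p. prime p \<and> 2^1 < p \<and> p \<le> 2^a}"
    by auto
  then have "(\<Sum>p | prime p \<and> p \<le> 2^a. 1 / real p) =
      1/2 + (\<Sum>p | prime p \<and> 2^1 < p \<and> p \<le> 2^a. 1 / real p)"
    by simp
  also have "\<dots> \<le> 1/2 + (2 + 2 * ln (real a) - 2 * ln (real 1))"
    using sum_inverse_primes_dyadic_le[of 1 a] assms by simp
  finally show ?thesis by simp
qed

lemma multiplicity_le_self:
  fixes p d :: nat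
  assumes "prime p" "d > 0"
  shows "multiplicity p d \<le> d"
proof -
  have "multiplicity p d < 2 ^ multiplicity p d" by (rule less_exp)
  also have "\<dots> \<le> p ^ multiplicity p d"
    using prime_ge_2_nat[OF assms(1)] by (intro power_mono) auto
  also have "\<dots> \<le> d"
    using assms by (intro dvd_imp_le multiplicity_dvd) auto
  finally show ?thesis by simp
qed

text \<open>A finite part of the expanded Euler product \<open>\<Prod>p. \<Sum>j. x p ^ j\<close>, indexed by the exponent
  vectors of the elements of \<open>D\<close>.\<close>

lemma sum_prod_power_multiplicity_le_euler_product:
  fixes P D :: "nat set" and x :: "nat \<Rightarrow> real"
  assumes "finite P" "finite D"
    and D: "\<And>d. d \<in> D \<Longrightarrow> d > 0 \<and> prime_factors d \<subseteq> P"
    and P: "\<And>p. p \<in> P \<Longrightarrow> prime p"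
    and x: "\<And>p. p \<in> P \<Longrightarrow> 0 \<le> x p \<and> x p < 1"
  shows "(\<Sum>d\<in>D. \<Prod>p\<in>P. x p ^ multiplicity p d) \<le> (\<Prod>p\<in>P. 1 / (1 - x p))"
proof -
  define J where "J = Suc (\<Sum>D)"
  define exps where "exps d = restrict (\<lambda>p. multiplicity p d) P" for d
  define F where "F e = (\<Prod>p\<in>P. x p ^ e p)" for e :: "nat \<Rightarrow> nat"
  have "inj_on exps D"
  proof (rule inj_onI)
    fix d d' assume dd: "d \<in> D" "d' \<in> D" "exps d = exps d'"
    show "d = d'"
    proof (rule multiplicity_eq_nat)
      fix q :: nat assume "prime q"
      show "multiplicity q d = multiplicity q d'"
      proof (cases "q \<in> P")
        case True
        then show ?thesis using dd(3) unfolding exps_def by (metis restrict_apply')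
      next
        case False
        then show ?thesis using \<open>prime q\<close> D dd
          by (metis in_prime_factors_iff not_dvd_imp_multiplicity_0 subsetD zero_less_iff_neq_zero)
      qed
    qed (use D dd in auto)
  qed
  have "exps ` D \<subseteq> PiE P (\<lambda>_. {..<J})"
  proof
    fix e assume "e \<in> exps ` D"
    then obtain d where d: "d \<in> D" "e = exps d" by auto
    have "d \<le> \<Sum>D" using \<open>finite D\<close> d(1) by (metis le_add1 sum.remove)
    then have "multiplicity p d < J" if "p \<in> P" for p
      using multiplicity_le_self[of p d] P[OF that] D[OF d(1)] unfolding J_def by simp
    then show "e \<in> PiE P (\<lambda>_. {..<J})" unfolding d(2) exps_def by auto
  qed
  have "(\<Sum>d\<in>D. \<Prod>p\<in>P. x p ^ multiplicity p d) = (\<Sum>e\<in>exps ` D. F e)"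
    using sum.reindex[OF \<open>inj_on exps D\<close>, of F] unfolding F_def exps_def by simp
  also have "\<dots> \<le> (\<Sum>e\<in>PiE P (\<lambda>_. {..<J}). F e)"
    using \<open>exps ` D \<subseteq> _\<close> \<open>finite P\<close> x
    by (intro sum_mono2) (auto intro!: finite_PiE prod_nonneg simp: F_def)
  also have "\<dots> = (\<Prod>p\<in>P. \<Sum>j<J. x p ^ j)"
    unfolding F_def using \<open>finite P\<close> by (rule prod_sum_PiE[symmetric]) simp
  also have "\<dots> \<le> (\<Prod>p\<in>P. 1 / (1 - x p))"
  proof (rule prod_mono)
    fix p assume "p \<in> P"
    have "(\<Sum>j<J. x p ^ j) = (1 - x p ^ J) / (1 - x p)"
      using x[OF \<open>p \<in> P\<close>] by (simp add: sum_gp_strict)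
    also have "\<dots> \<le> 1 / (1 - x p)"
      using x[OF \<open>p \<in> P\<close>] by (intro divide_right_mono) auto
    finally show "0 \<le> (\<Sum>j<J. x p ^ j) \<and> (\<Sum>j<J. x p ^ j) \<le> 1 / (1 - x p)"
      using x[OF \<open>p \<in> P\<close>] by (auto intro: sum_nonneg)
  qed
  finally show ?thesis .
qed

lemma powr_eq_prod_prime_powers:
  fixes d :: nat and P :: "nat set" and c :: real
  assumes "d > 0" "finite P" "prime_factors d \<subseteq> P" and P: "\<And>p. p \<in> P \<Longrightarrow> prime p"
  shows "real d powr c = (\<Prod>p\<in>P. (real p powr c) ^ multiplicity p d)"
proof -
  have "multiplicity p d = 0" if "p \<in> P - prime_factors d" for p
    using that P \<open>d > 0\<close> by (auto simp: in_prime_factors_iff not_dvd_imp_multiplicity_0)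
  then have "(\<Prod>p\<in>prime_factors d. p ^ multiplicity p d) = (\<Prod>p\<in>P. p ^ multiplicity p d)"
    using assms(2,3) by (intro prod.mono_neutral_left) auto
  then have "d = (\<Prod>p\<in>P. p ^ multiplicity p d)"
    using prime_factorization_nat[OF \<open>d > 0\<close>] by simp
  then have "real d powr c = real (\<Prod>p\<in>P. p ^ multiplicity p d) powr c"
    by simp
  also have "\<dots> = (\<Prod>p\<in>P. (real p ^ multiplicity p d) powr c)"
    by (simp add: prod_powr_distrib)
  also have "\<dots> = (\<Prod>p\<in>P. (real p powr c) ^ multiplicity p d)"
  proof (rule prod.cong[OF refl])
    fix p assume "p \<in> P"
    then have "real p > 0" using P prime_gt_0_nat by auto
    then show "(real p ^ multiplicity p d) powr c = (real p powr c) ^ multiplicity p d"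
      by (simp add: powr_realpow[symmetric] powr_powr powr_power mult.commute)
  qed
  finally show ?thesis .
qed

text \<open>Rankin's trick: \<open>1/d \<le> Y powr -\<sigma> * d powr (\<sigma> - 1)\<close> for \<open>d \<ge> Y\<close>, and the right-hand side
  is multiplicative in \<open>d\<close>.\<close>

lemma sum_inverse_ge_le_euler_product:
  fixes D P :: "nat set" and Y \<sigma> :: real
  assumes "finite D" "finite P"
    and D: "\<And>d. d \<in> D \<Longrightarrow> d > 0 \<and> prime_factors d \<subseteq> P \<and> Y \<le> real d"
    and P: "\<And>p. p \<in> P \<Longrightarrow> prime p"
    and "Y > 0" "0 < \<sigma>" "\<sigma> < 1"
  shows "(\<Sum>d\<in>D. 1 / real d) \<le> Y powr (-\<sigma>) * (\<Prod>p\<in>P. 1 / (1 - real p powr (\<sigma> - 1)))"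
proof -
  have "(\<Sum>d\<in>D. 1 / real d) \<le> (\<Sum>d\<in>D. Y powr (-\<sigma>) * real d powr (\<sigma> - 1))"
  proof (rule sum_mono)
    fix d assume "d \<in> D"
    then have "Y powr \<sigma> \<le> real d powr \<sigma>" "d > 0"
      using D \<open>Y > 0\<close> \<open>\<sigma> > 0\<close> by (auto intro: powr_mono2)
    then show "1 / real d \<le> Y powr (-\<sigma>) * real d powr (\<sigma> - 1)"
      using \<open>Y > 0\<close> by (simp add: powr_minus powr_diff field_simps)
  qed
  also have "\<dots> = Y powr (-\<sigma>) * (\<Sum>d\<in>D. \<Prod>p\<in>P. (real p powr (\<sigma> - 1)) ^ multiplicity p d)"
    unfolding sum_distrib_left using D P \<open>finite P\<close>
    by (intro sum.cong refl arg_cong[where f = "\<lambda>t. Y powr (-\<sigma>) * t"] powr_eq_prod_prime_powers)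
      auto
  also have "\<dots> \<le> Y powr (-\<sigma>) * (\<Prod>p\<in>P. 1 / (1 - real p powr (\<sigma> - 1)))"
  proof (intro mult_left_mono sum_prod_power_multiplicity_le_euler_product)
    fix p assume "p \<in> P"
    then have "1 < real p" using P prime_gt_1_nat by auto
    then show "0 \<le> real p powr (\<sigma> - 1) \<and> real p powr (\<sigma> - 1) < 1"
      using \<open>\<sigma> < 1\<close> powr_less_one[of "real p" "\<sigma> - 1"] by simp
  qed (use assms in auto)
  finally show ?thesis .
qed

lemma inverse_one_minus_le_exp:
  fixes x :: real
  assumes "0 \<le> x" "x \<le> 3/4"
  shows "1 / (1 - x) \<le> exp (4 * x)"
proof -
  have "1 / (1 - x) = 1 + x / (1 - x)" using assms by (simp add: field_simps)
  also have "\<dots> \<le> exp (x / (1 - x))" by (rule exp_ge_add_one_self)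
  also have "\<dots> \<le> exp (4 * x)"
    using assms mult_left_mono[of "4 * x" 3 x] by (simp add: field_simps)
  finally show ?thesis .
qed

lemma euler_product_dyadic_primes_le:
  fixes a :: nat
  assumes "1 \<le> a"
  shows "(\<Prod>p | prime p \<and> p \<le> 2^a. 1 / (1 - real p powr (1 / (2 * real a) - 1)))
    \<le> exp 15 * real a ^ 12"
proof -
  define \<sigma> :: real where "\<sigma> = 1 / (2 * real a)"
  have factor_le: "1 / (1 - real p powr (\<sigma> - 1)) \<le> exp (6 / real p)"
    if "prime p" "p \<le> 2^a" for p :: nat
  proof -
    have "real p \<ge> 2" using prime_ge_2_nat[OF \<open>prime p\<close>] by linarith
    have "real p \<le> 2 ^ a"
      using \<open>p \<le> 2^a\<close> by (metis of_nat_le_iff of_nat_numeral of_nat_power)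
    then have "real p powr \<sigma> \<le> (2 ^ a) powr \<sigma>"
      unfolding \<sigma>_def by (intro powr_mono2) auto
    also have "\<dots> = sqrt 2"
      using assms unfolding \<sigma>_def by (simp add: powr_realpow[symmetric] powr_powr powr_half_sqrt)
    also have "\<dots> \<le> 3/2" by (rule real_le_lsqrt) (auto simp: power2_eq_square)
    finally have "real p powr \<sigma> / real p \<le> 3/2 / real p"
      by (rule divide_right_mono) simp
    then have "real p powr (\<sigma> - 1) \<le> 3/2 / real p"
      using \<open>real p \<ge> 2\<close> by (simp add: powr_diff)
    moreover have "3/2 / real p \<le> 3/4" using \<open>real p \<ge> 2\<close> by (simp add: field_simps)
    ultimately have "1 / (1 - real p powr (\<sigma> - 1)) \<le> exp (4 * real p powr (\<sigma> - 1))"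
      by (intro inverse_one_minus_le_exp) auto
    also have "\<dots> \<le> exp (6 / real p)"
      using \<open>real p powr (\<sigma> - 1) \<le> 3/2 / real p\<close> by simp
    finally show ?thesis .
  qed
  have "(\<Prod>p | prime p \<and> p \<le> 2^a. 1 / (1 - real p powr (\<sigma> - 1)))
      \<le> (\<Prod>p | prime p \<and> p \<le> 2^a. exp (6 / real p))"
  proof (rule prod_mono)
    fix p :: nat assume p: "p \<in> {p. prime p \<and> p \<le> 2^a}"
    then have "1 < real p" using prime_gt_1_nat[of p] by simp
    moreover have "\<sigma> - 1 < 0" using assms unfolding \<sigma>_def by (simp add: field_simps)
    ultimately have "real p powr (\<sigma> - 1) < 1" by (rule powr_less_one)
    then show "0 \<le> 1 / (1 - real p powr (\<sigma> - 1)) \<and>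
        1 / (1 - real p powr (\<sigma> - 1)) \<le> exp (6 / real p)"
      using factor_le p by auto
  qed
  also have "\<dots> = exp (6 * (\<Sum>p | prime p \<and> p \<le> 2^a. 1 / real p))"
    by (simp add: exp_sum sum_distrib_left)
  also have "\<dots> \<le> exp (6 * (5/2 + 2 * ln (real a)))"
    using sum_inverse_primes_le[OF assms] by simp
  also have "\<dots> = exp 15 * real a ^ 12"
    using assms exp_of_nat_mult[of 12 "ln (real a)"] by (simp add: exp_add)
  finally show ?thesis unfolding \<sigma>_def .
qed

lemma smooth_part_pos: "smooth_part z n > 0"
  unfolding smooth_part_def by (intro prod_pos) (auto simp: in_prime_factors_iff prime_gt_0_nat)

lemma smooth_part_dvd: "smooth_part z n dvd n"
proof (cases "n = 0")
  case False
  have "smooth_part z n dvd (\<Prod>p\<in>prime_factors n. p ^ multiplicity p n)"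
    unfolding smooth_part_def by (rule prod_dvd_prod_subset) auto
  then show ?thesis using prime_factorization_nat[of n] False by simp
qed simp

lemma prime_factors_smooth_part: "prime_factors (smooth_part z n) \<subseteq> {p. prime p \<and> real p \<le> z}"
proof
  fix q assume "q \<in> prime_factors (smooth_part z n)"
  then have q: "prime q" "q dvd smooth_part z n" by (auto simp: in_prime_factors_iff)
  then obtain p where p: "p \<in> prime_factors n" "real p \<le> z" "q dvd p ^ multiplicity p n"
    unfolding smooth_part_def by (auto simp: prime_dvd_prod_iff)
  then have "q dvd p" using q(1) prime_dvd_power by blast
  then have "q = p" using q(1) p(1) primes_dvd_imp_eq by (auto simp: in_prime_factors_iff)
  then show "q \<in> {p. prime p \<and> real p \<le> z}" using p(2) q(1) by simp
qed

lemma card_large_smooth_part_le: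
  fixes N a :: nat and \<epsilon> :: real
  assumes "1 \<le> a" "1 \<le> N"
  shows "real (card {n\<in>{1..N}. real N powr \<epsilon> \<le> real (smooth_part (2^a) n)})
    \<le> real N * real N powr (- \<epsilon> / (2 * real a)) * (exp 15 * real a ^ 12)"
proof -
  define P where "P = {p. prime p \<and> p \<le> (2::nat)^a}"
  define D where "D = {d\<in>{1..N}. prime_factors d \<subseteq> P \<and> real N powr \<epsilon> \<le> real d}"
  have "{n\<in>{1..N}. real N powr \<epsilon> \<le> real (smooth_part (2^a) n)} \<subseteq> {n\<in>{1..N}. \<exists>d\<in>D. d dvd n}"
  proof safe
    fix n assume n: "n \<in> {1..N}" "real N powr \<epsilon> \<le> real (smooth_part (2^a) n)"
    have "smooth_part (2^a) n \<le> n"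
      using n(1) smooth_part_dvd by (intro dvd_imp_le) auto
    moreover have "prime_factors (smooth_part (2^a) n) \<subseteq> P"
      using prime_factors_smooth_part[of "2^a" n] unfolding P_def by auto
    ultimately have "smooth_part (2^a) n \<in> D"
      using n smooth_part_pos[of "2^a" n] unfolding D_def by auto
    then show "\<exists>d\<in>D. d dvd n" using smooth_part_dvd by blast
  qed
  then have "real (card {n\<in>{1..N}. real N powr \<epsilon> \<le> real (smooth_part (2^a) n)})
      \<le> real (card {n\<in>{1..N}. \<exists>d\<in>D. d dvd n})"
    by (intro of_nat_mono card_mono) auto
  also have "\<dots> \<le> real N * (\<Sum>d\<in>D. 1 / real d)"
    by (rule card_multiples_UN_le) (auto simp: D_def)
  also have "\<dots> \<le> real N * ((real N powr \<epsilon>) powr (- (1 / (2 * real a)))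
      * (\<Prod>p\<in>P. 1 / (1 - real p powr (1 / (2 * real a) - 1))))"
    using assms unfolding D_def P_def
    by (intro mult_left_mono sum_inverse_ge_le_euler_product) auto
  also have "\<dots> = real N * real N powr (- \<epsilon> / (2 * real a))
      * (\<Prod>p\<in>P. 1 / (1 - real p powr (1 / (2 * real a) - 1)))"
    by (simp add: powr_powr)
  also have "\<dots> \<le> real N * real N powr (- \<epsilon> / (2 * real a)) * (exp 15 * real a ^ 12)"
    using euler_product_dyadic_primes_le[OF assms(1)] unfolding P_def
    by (intro mult_left_mono) auto
  finally show ?thesis .
qed

text \<open>Each \<open>k\<close>-subset \<open>T\<close> occurs in the expansion of \<open>\<Prod>p\<in>P. (1 + r * w p)\<close> with coefficient
  \<open>r ^ k\<close>.\<close>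

lemma sum_prod_subsets_card_le_exp:
  fixes P :: "'a set" and w :: "'a \<Rightarrow> real"
  assumes "finite P" "\<And>p. p \<in> P \<Longrightarrow> 0 \<le> w p" "r > 0"
  shows "(\<Sum>T | T \<subseteq> P \<and> card T = k. \<Prod>p\<in>T. w p) \<le> exp (r * (\<Sum>p\<in>P. w p)) / r ^ k"
proof -
  have "(\<Sum>T | T \<subseteq> P \<and> card T = k. \<Prod>p\<in>T. w p)
      = (\<Sum>T | T \<subseteq> P \<and> card T = k. \<Prod>p\<in>T. r * w p) / r ^ k"
    using \<open>r > 0\<close> by (simp add: sum_divide_distrib prod.distrib)
  also have "\<dots> \<le> (\<Sum>T\<in>Pow P. \<Prod>p\<in>T. r * w p) / r ^ k"
    using assms by (intro divide_right_mono sum_mono2) (auto intro!: prod_nonneg)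
  also have "\<dots> = (\<Prod>p\<in>P. r * w p + 1) / r ^ k"
    by (simp add: prod_add[OF \<open>finite P\<close>])
  also have "\<dots> \<le> (\<Prod>p\<in>P. exp (r * w p)) / r ^ k"
    using assms exp_ge_add_one_self
    by (intro divide_right_mono prod_mono) (auto simp: add.commute)
  also have "\<dots> = exp (r * (\<Sum>p\<in>P. w p)) / r ^ k"
    by (simp add: exp_sum[OF \<open>finite P\<close>] sum_distrib_left)
  finally show ?thesis .
qed

lemma card_many_large_prime_factors_le:
  fixes N a b k :: nat and r :: real
  assumes "1 \<le> a" "a \<le> b" "N \<le> 2^b" "r > 0"
  shows "real (card {n\<in>{1..N}. k \<le> card {p\<in>prime_factors n. 2^a < p}})
    \<le> real N * exp (r * (2 + 2 * ln (real b) - 2 * ln (real a))) / r ^ k"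
proof -
  define P where "P = {p. prime p \<and> 2^a < p \<and> p \<le> (2::nat)^b}"
  define \<T> where "\<T> = {T. T \<subseteq> P \<and> card T = k}"
  have "finite P" unfolding P_def by auto
  then have "finite \<T>" unfolding \<T>_def by (auto intro: finite_subset[of _ "Pow P"])
  have "{n\<in>{1..N}. k \<le> card {p\<in>prime_factors n. 2^a < p}} \<subseteq> {n\<in>{1..N}. \<exists>T\<in>\<T>. \<Prod>T dvd n}"
  proof safe
    fix n assume n: "n \<in> {1..N}" "k \<le> card {p\<in>prime_factors n. 2^a < p}"
    then obtain T where T: "T \<subseteq> {p\<in>prime_factors n. 2^a < p}" "card T = k"
      by (meson obtain_subset_with_card_n)
    have "p \<le> 2^b" if "p \<in> prime_factors n" for p
      using that n(1) assms(3) dvd_imp_le[of p n] by (auto simp: in_prime_factors_iff)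
    then have "T \<in> \<T>" using T unfolding \<T>_def P_def by (auto simp: in_prime_factors_iff)
    moreover have "\<Prod>T dvd n"
      using T n(1) finite_subset[OF T(1)]
      by (intro prod_prime_divisors_dvd) (auto simp: in_prime_factors_iff)
    ultimately show "\<exists>T\<in>\<T>. \<Prod>T dvd n" by blast
  qed
  then have "real (card {n\<in>{1..N}. k \<le> card {p\<in>prime_factors n. 2^a < p}})
      \<le> real (card {n\<in>{1..N}. \<exists>T\<in>\<T>. \<Prod>T dvd n})"
    by (intro of_nat_mono card_mono) auto
  also have "\<dots> \<le> real N * (\<Sum>T\<in>\<T>. 1 / real (\<Prod>T))"
    using \<open>finite \<T>\<close> \<open>finite P\<close>
    by (intro card_multiples_UN_le) (auto simp: \<T>_def P_def prime_gt_0_nat intro!: prod_pos)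
  also have "\<dots> = real N * (\<Sum>T\<in>\<T>. \<Prod>p\<in>T. 1 / real p)"
    by (simp add: prod_dividef)
  also have "\<dots> \<le> real N * (exp (r * (\<Sum>p\<in>P. 1 / real p)) / r ^ k)"
    unfolding \<T>_def using \<open>finite P\<close> \<open>r > 0\<close>
    by (intro mult_left_mono sum_prod_subsets_card_le_exp) auto
  also have "\<dots> \<le> real N * (exp (r * (2 + 2 * ln (real b) - 2 * ln (real a))) / r ^ k)"
    using sum_inverse_primes_dyadic_le[OF assms(1,2)] \<open>r > 0\<close> unfolding P_def
    by (intro mult_left_mono divide_right_mono) auto
  finally show ?thesis by simp
qed

lemma omega_minus_omega_le:
  "real (omega n) - real (omega_le z n) = real (card {p\<in>prime_factors n. z < real p})"
proof -
  have "{p\<in>prime_factors n. z < real p} = prime_factors n - {p\<in>prime_factors n. real p \<le> z}"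
    by auto
  moreover have "card {p\<in>prime_factors n. real p \<le> z} \<le> card (prime_factors n)"
    by (intro card_mono) auto
  ultimately show ?thesis
    unfolding omega_def omega_le_def by (simp add: card_Diff_subset of_nat_diff)
qed

lemma card_exceptional_le:
  fixes N a b :: nat and \<epsilon> r :: real
  assumes "1 \<le> a" "a \<le> b" "1 \<le> N" "N \<le> 2^b" "1 \<le> r"
  shows "real (card {n\<in>{1..N}. \<not> (real (smooth_part (2^a) n) < real N powr \<epsilon> \<and>
            real (omega n) - real (omega_le (2^a) n) < \<epsilon> * ln (ln (2^a)))})
    \<le> real N * real N powr (- \<epsilon> / (2 * real a)) * (exp 15 * real a ^ 12)
      + real N * exp (r * (2 + 2 * ln (real b) - 2 * ln (real a))) / r powr (\<epsilon> * ln (ln (2^a)))"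
    (is "real (card ?E) \<le> ?T\<^sub>1 + real N * ?S / _")
proof -
  define k where "k = nat \<lceil>\<epsilon> * ln (ln (2^a))\<rceil>"
  define B\<^sub>1 where "B\<^sub>1 = {n\<in>{1..N}. real N powr \<epsilon> \<le> real (smooth_part (2^a) n)}"
  define B\<^sub>2 where "B\<^sub>2 = {n\<in>{1..N}. k \<le> card {p\<in>prime_factors n. 2^a < p}}"
  have "?E \<subseteq> B\<^sub>1 \<union> B\<^sub>2"
  proof
    fix n assume "n \<in> ?E"
    then have n: "n \<in> {1..N}"
      and "\<not> (real (smooth_part (2^a) n) < real N powr \<epsilon> \<and>
            real (omega n) - real (omega_le (2^a) n) < \<epsilon> * ln (ln (2^a)))"
      by auto
    show "n \<in> B\<^sub>1 \<union> B\<^sub>2"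
    proof (cases "n \<in> B\<^sub>1")
      case False
      with n have "\<epsilon> * ln (ln (2^a)) \<le> real (omega n) - real (omega_le (2^a) n)"
        using \<open>\<not> (_ \<and> _)\<close> unfolding B\<^sub>1_def by auto
      also have "\<dots> = real (card {p\<in>prime_factors n. 2^a < p})"
        by (simp add: omega_minus_omega_le)
      finally have "k \<le> card {p\<in>prime_factors n. 2^a < p}"
        unfolding k_def by (simp add: nat_le_iff ceiling_le_iff)
      then show ?thesis using n unfolding B\<^sub>2_def by simp
    qed simp
  qed
  moreover have "finite (B\<^sub>1 \<union> B\<^sub>2)" by (simp add: B\<^sub>1_def B\<^sub>2_def)
  ultimately have "card ?E \<le> card B\<^sub>1 + card B\<^sub>2"
    using card_Un_le[of B\<^sub>1 B\<^sub>2] by (meson card_mono le_trans)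
  then have "real (card ?E) \<le> real (card B\<^sub>1) + real (card B\<^sub>2)" by simp
  also have "\<dots> \<le> ?T\<^sub>1 + real N * ?S / r ^ k"
    unfolding B\<^sub>1_def B\<^sub>2_def using assms
    by (intro add_mono card_large_smooth_part_le card_many_large_prime_factors_le) auto
  also have "\<dots> \<le> ?T\<^sub>1 + real N * ?S / r powr (\<epsilon> * ln (ln (2^a)))"
  proof -
    have "r powr (\<epsilon> * ln (ln (2^a))) \<le> r powr real k"
      using \<open>1 \<le> r\<close> unfolding k_def by (intro powr_mono) linarith+
    then have "r powr (\<epsilon> * ln (ln (2^a))) \<le> r ^ k"
      using \<open>1 \<le> r\<close> by (simp add: powr_realpow)
    then show ?thesis
      using \<open>1 \<le> r\<close> by (intro add_left_mono divide_left_mono) auto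
  qed
  finally show ?thesis .
qed

text \<open>The cutoff is \<open>z = 2 ^ \<lfloor>log2_cutoff A \<epsilon> N\<rfloor>\<close>. The constant \<open>A + 12\<close> makes
  \<open>N powr (- \<epsilon> / (2 * log2_cutoff A \<epsilon> N)) = (ln N) powr (- A - 12)\<close>, which absorbs the factor
  \<open>a ^ 12\<close> of the Rankin bound.\<close>

definition log2_cutoff :: "real \<Rightarrow> real \<Rightarrow> real \<Rightarrow> real" where
  "log2_cutoff A \<epsilon> x = \<epsilon> * ln x / (2 * (A + 12) * ln (ln x))"

lemma eventually_log2_cutoff:
  fixes A \<epsilon> :: real
  assumes "A > 0" "\<epsilon> > 0"
  shows "\<forall>\<^sub>F x in at_top. 1 < x \<and> 1 \<le> ln (ln x) \<and> 2 \<le> log2_cutoff A \<epsilon> x \<and>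
    log2_cutoff A \<epsilon> x \<le> log 2 x \<and> log2_cutoff A \<epsilon> x * ln 2 < \<epsilon> * ln x \<and>
    (1 - \<epsilon>) * ln (ln x) < ln (log2_cutoff A \<epsilon> x * ln 2 / 2) \<and>
    ln x powr - (A + 12) * log2_cutoff A \<epsilon> x ^ 12 \<le> ln x powr - A \<and>
    sqrt (ln (ln x)) * (2 + 2 * ln ((log 2 x + 1) / (log2_cutoff A \<epsilon> x / 2))) + A * ln (ln x)
      \<le> \<epsilon> * ln (log2_cutoff A \<epsilon> x * ln 2 / 2) * ln (ln (ln x)) / 2"
  using assms unfolding log2_cutoff_def by (intro eventually_conj) real_asymp+

lemma smooth_term_le:
  fixes x A \<epsilon> q :: real and a :: nat
  assumes "1 < x" "1 \<le> ln (ln x)" "\<epsilon> > 0" "q = log2_cutoff A \<epsilon> x" "0 < real a" "real a \<le> q"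
    and "ln x powr - (A + 12) * q ^ 12 \<le> ln x powr - A"
  shows "x powr (- \<epsilon> / (2 * real a)) * (exp 15 * real a ^ 12) \<le> exp 15 * ln x powr - A"
proof -
  have "x powr (- \<epsilon> / (2 * real a)) \<le> x powr (- \<epsilon> / (2 * q))"
    using assms by (intro powr_mono) (auto simp: field_simps)
  also have "\<dots> = ln x powr - (A + 12)"
  proof -
    have "\<epsilon> / (2 * q) * ln x = (A + 12) * ln (ln x)"
      using assms unfolding log2_cutoff_def by (auto simp: field_simps)
    then show ?thesis using \<open>1 < x\<close> by (simp add: powr_def algebra_simps)
  qed
  finally have "x powr (- \<epsilon> / (2 * real a)) * real a ^ 12 \<le> ln x powr - (A + 12) * q ^ 12"
    using assms by (intro mult_mono power_mono) auto
  then show ?thesis using assms(7) by simp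
qed

lemma rough_term_le:
  fixes A \<epsilon> L q s t u :: real and a b :: nat
  assumes "\<epsilon> > 0" "1 \<le> L" "0 < q" "q / 2 \<le> real a" "a \<le> b" "real b \<le> s" "u \<le> t"
    and "sqrt L * (2 + 2 * ln (s / (q / 2))) + A * L \<le> \<epsilon> * u * ln L / 2"
  shows "exp (sqrt L * (2 + 2 * ln (real b) - 2 * ln (real a))) / sqrt L powr (\<epsilon> * t) \<le> exp (- A * L)"
proof -
  have "real a > 0" "real b > 0" using assms(3-5) by auto
  then have "ln (real b) - ln (real a) = ln (real b / real a)" by (simp add: ln_div)
  also have "\<dots> \<le> ln (s / (q / 2))"
    using assms \<open>real a > 0\<close> \<open>real b > 0\<close> by (intro ln_mono frac_le) auto
  finally have "sqrt L * (2 + 2 * ln (real b) - 2 * ln (real a)) \<le> sqrt L * (2 + 2 * ln (s / (q / 2)))"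
    using \<open>1 \<le> L\<close> by (intro mult_left_mono) auto
  moreover have "\<epsilon> * u * ln L / 2 \<le> \<epsilon> * t * ln (sqrt L)"
    using assms(1,2,7) by (simp add: ln_sqrt mult_right_mono)
  ultimately have "sqrt L * (2 + 2 * ln (real b) - 2 * ln (real a)) - \<epsilon> * t * ln (sqrt L) \<le> - A * L"
    using assms(8) by linarith
  then show ?thesis using \<open>1 \<le> L\<close> by (simp add: powr_def exp_diff[symmetric] mult.commute)
qed

lemma exceptional_set_small:
  fixes A \<epsilon> :: real and N :: nat
  defines "q \<equiv> log2_cutoff A \<epsilon> (real N)" and "L \<equiv> ln (ln (real N))"
  assumes "\<epsilon> > 0" "1 < real N" "1 \<le> L" "2 \<le> q" "q \<le> log 2 (real N)"
    and cutoff_small: "q * ln 2 < \<epsilon> * ln (real N)"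
    and cutoff_large: "(1 - \<epsilon>) * L < ln (q * ln 2 / 2)"
    and smooth_loss: "ln (real N) powr - (A + 12) * q ^ 12 \<le> ln (real N) powr - A"
    and rough_loss: "sqrt L * (2 + 2 * ln ((log 2 (real N) + 1) / (q / 2))) + A * L
      \<le> \<epsilon> * ln (q * ln 2 / 2) * ln L / 2"
  shows "\<exists>z::real. z > 1 \<and> ln (ln z) > (1 - \<epsilon>) * ln (ln (real N)) \<and> z < real N powr \<epsilon> \<and>
      real (card {n \<in> {1..N}. \<not> (real (smooth_part z n) < real N powr \<epsilon> \<and>
                 real (omega n) - real (omega_le z n) < \<epsilon> * ln (ln z))})
        \<le> (exp 15 + 1) * real N * ln (real N) powr (- A)"
proof -
  define a where "a = nat \<lfloor>q\<rfloor>"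
  define b where "b = nat \<lceil>log 2 (real N)\<rceil>"
  define z :: real where "z = 2 ^ a"
  have a: "2 \<le> a" "q / 2 \<le> real a" "real a \<le> q"
    unfolding a_def using \<open>2 \<le> q\<close> by linarith+
  have "log 2 (real N) > 0" using \<open>1 < real N\<close> by simp
  then have b: "log 2 (real N) \<le> real b" "real b \<le> log 2 (real N) + 1"
    unfolding b_def by (simp_all add: le_of_int_ceiling of_int_ceiling_le_add_one)
  then have "real N \<le> 2 ^ b"
    using \<open>1 < real N\<close> by (simp add: log_le_iff powr_realpow[symmetric])
  then have "N \<le> 2 ^ b" by (metis of_nat_le_iff of_nat_numeral of_nat_power)
  have "a \<le> b" using a(3) b(1) \<open>q \<le> log 2 (real N)\<close> by linarith
  have ln_z: "q * ln 2 / 2 \<le> ln z" "ln z \<le> q * ln 2"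
    using a unfolding z_def by (simp_all add: ln_realpow)
  have "z > 1" using a(1) unfolding z_def by simp
  have lnln_z: "ln (q * ln 2 / 2) \<le> ln (ln z)"
    using ln_z(1) \<open>2 \<le> q\<close> by (intro ln_mono) auto
  have "z < real N powr \<epsilon>"
  proof -
    have "ln z < \<epsilon> * ln (real N)" using ln_z(2) cutoff_small by linarith
    then have "exp (ln z) < exp (\<epsilon> * ln (real N))" by simp
    then show ?thesis using \<open>z > 1\<close> \<open>1 < real N\<close> by (simp add: powr_def)
  qed
  have "real (card {n \<in> {1..N}. \<not> (real (smooth_part z n) < real N powr \<epsilon> \<and>
                 real (omega n) - real (omega_le z n) < \<epsilon> * ln (ln z))})
      \<le> real N * (real N powr (- \<epsilon> / (2 * real a)) * (exp 15 * real a ^ 12))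
        + real N * (exp (sqrt L * (2 + 2 * ln (real b) - 2 * ln (real a)))
                    / sqrt L powr (\<epsilon> * ln (ln z)))"
    using card_exceptional_le[of a b N "sqrt L" \<epsilon>] a(1) \<open>a \<le> b\<close> \<open>N \<le> 2 ^ b\<close> \<open>1 < real N\<close> \<open>1 \<le> L\<close>
    unfolding z_def by (simp add: mult.assoc)
  also have "\<dots> \<le> real N * (exp 15 * ln (real N) powr - A) + real N * exp (- A * L)"
    using a b \<open>a \<le> b\<close> lnln_z rough_loss smooth_loss assms(1-5)
    by (intro add_mono mult_left_mono smooth_term_le rough_term_le) (auto simp: q_def L_def)
  also have "\<dots> = (exp 15 + 1) * real N * ln (real N) powr (- A)"
    using \<open>1 < real N\<close> unfolding L_def by (simp add: powr_def algebra_simps)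
  finally show ?thesis
    using \<open>z > 1\<close> \<open>z < real N powr \<epsilon>\<close> lnln_z cutoff_large unfolding L_def by fastforce
qed

lemma eventually_exceptional_set_small:
  fixes A \<epsilon> :: real
  assumes "A > 0" "\<epsilon> > 0"
  shows "\<forall>\<^sub>F N in sequentially.
    \<exists>z::real. z > 1 \<and> ln (ln z) > (1 - \<epsilon>) * ln (ln (real N)) \<and> z < real N powr \<epsilon> \<and>
      real (card {n \<in> {1..N}. \<not> (real (smooth_part z n) < real N powr \<epsilon> \<and>
                 real (omega n) - real (omega_le z n) < \<epsilon> * ln (ln z))})
        \<le> (exp 15 + 1) * real N * ln (real N) powr (- A)"
  using eventually_compose_filterlim[OF eventually_log2_cutoff[OF assms] filterlim_real_sequentially]
  by (rule eventually_mono) (intro exceptional_set_small; use assms in auto)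

theorem lemma5p1:
  fixes A \<epsilon> :: real
  assumes "A > 0" and "\<epsilon> > 0"
  shows "\<exists>C N0. \<forall>N::nat. N \<ge> N0 \<longrightarrow>
    (\<exists>z::real. z > 1 \<and> ln (ln z) > (1 - \<epsilon>) * ln (ln (real N)) \<and> z < real N powr \<epsilon> \<and>
      real (card {n \<in> {1..N}. \<not> (real (smooth_part z n) < real N powr \<epsilon> \<and>
                 real (omega n) - real (omega_le z n) < \<epsilon> * ln (ln z))})
        \<le> C * real N * ln (real N) powr (- A))"
  using eventually_exceptional_set_small[OF assms] unfolding eventually_sequentially by blast

end
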